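(* Let $0\le\lambda<1$ and let $Y_1,Y_2,\ldots$ be independent and identically distributed Poisson random variables with mean $\lambda$, i.e. $\Pr(Y_i=y)=\frac{\lambda^y}{y!}e^{-\lambda}$ for $y=0,1,2,\ldots$. Define the random variable $X$ by $X=0$ if $Y_1=0$, and otherwise $$X=\min\Big\{z\ge 1:\ \sum_{i=1}^{z}Y_i\le z\Big\}.$$ Then $X$ is almost surely finite, with distribution $$\Pr(X=x)=\begin{cases} e^{-\lambda}, & x=0,\\ \lambda e^{-\lambda}, & x=1,\\ \dfrac{(x-1)^{x-2}}{x\,(x-2)!}\lambda^{x}e^{-x\lambda}, & x\ge 2,\end{cases}$$ and its first two moments are $$\mathbb{E}[X]=\frac{\lambda}{1-\lambda}e^{-\lambda},\qquad \mathbb{E}[X^2]=\frac{1-\lambda+\lambda^2}{(1-\lambda)^2}\,\mathbb{E}[X].$$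
   Context: Interpretation (not needed for the statement): time is divided into slots, each containing one coded packet on the redundancy path; $Y_i$ is the number of packets lost in slot $i$ after the last decoding event, with Poisson approximation of mean $\lambda=\epsilon_c+\sum_{i\in\mathcal{P}}\alpha_i\epsilon_i$, where $\epsilon_c$ is the erasure probability of the path carrying coded packets and $\alpha_i$ is the number of information packets sent on path $i$ per coded packet; $X$ is the number of slots between consecutive decoding events. *)

theory Defs
  imports "HOL-Probability.Probability"
begin

text \<open>X = 0 if Y 1 = 0, otherwise the least z >= 1 with Y 1 + ... + Y z <= z.
  (On the null event where no such z exists, LEAST yields an unspecified value.)\<close>
definition decode_slots :: "(nat \<Rightarrow> 'a \<Rightarrow> nat) \<Rightarrow> 'a \<Rightarrow> nat" where
  "decode_slots Y \<omega> =
     (if Y 1 \<omega> = 0 then 0 else (LEAST z. 1 \<le> z \<and> (\<Sum>i=1..z. Y i \<omega>) \<le> z))"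

end

theory Submission
  imports Defs
begin

(*
  Given Y 1 = y + 1 > 0, the decoding time is one slot plus the time a discrete-time queue with
  initial backlog y, one departure per slot and Poisson(lam) arrivals per slot needs to become
  empty. These first-passage probabilities satisfy a one-step recursion in the backlog, and an
  Abel-type binomial identity shows that for Poisson arrivals they are the Borel-Tanner
  probabilities, which gives the law of the decoding time. For lam < 1 an exponential (Chernoff)
  bound makes the passage a.s. finite with geometric tails. Passage times are additive in the
  backlog, so their first two moments are linear and quadratic in it; first-step analysis fixes
  the constants (the mean passage time from backlog 1 is 1 / (1 - lam)), and averaging over Y 1
  yields both moments of the decoding time.
*)

text \<open>\<open>first_passage p m n\<close> is the probability that a queue with backlog \<open>m\<close>, one departure
  per slot and i.i.d. arrivals with law \<open>p\<close> per slot first becomes empty after exactly \<open>n\<close>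
  slots. Arrivals \<open>y > n\<close> in the first slot cannot be worked off in time, hence the truncated sum.\<close>

fun first_passage :: "(nat \<Rightarrow> real) \<Rightarrow> nat \<Rightarrow> nat \<Rightarrow> real" where
  "first_passage p m 0 = (if m = 0 then 1 else 0)"
| "first_passage p 0 (Suc n) = 0"
| "first_passage p (Suc m) (Suc n) = (\<Sum>y\<le>n. p y * first_passage p (m + y) n)"

lemma first_passage_eq_0: "n < m \<Longrightarrow> first_passage p m n = 0"
proof (induction n arbitrary: m)
  case 0
  then show ?case by simp
next
  case (Suc n)
  then obtain m' where m: "m = Suc m'" by (cases m) auto
  have "first_passage p (m' + y) n = 0" for y
    using Suc.IH Suc.prems by (simp add: m)
  then show ?case by (simp add: m)
qed

lemma first_passage_0_left: "first_passage p 0 n = (if n = 0 then 1 else 0)"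
  by (cases n) auto

lemma first_passage_nonneg: "(\<And>y. 0 \<le> p y) \<Longrightarrow> 0 \<le> first_passage p m n"
proof (induction n arbitrary: m)
  case 0
  then show ?case by simp
next
  case (Suc n)
  then show ?case by (cases m) (auto intro!: sum_nonneg)
qed

lemma first_passage_Suc_Suc_atMost:
  assumes "n \<le> N"
  shows "first_passage p (Suc m) (Suc n) = (\<Sum>y\<le>N. p y * first_passage p (m + y) n)"
proof -
  have "(\<Sum>y\<le>N. p y * first_passage p (m + y) n) = (\<Sum>y\<le>n. p y * first_passage p (m + y) n)"
    using assms by (intro sum.mono_neutral_right) (auto simp: first_passage_eq_0)
  then show ?thesis by simp
qed

text \<open>Working off a backlog \<open>a + b\<close> means first working off \<open>a\<close>, then \<open>b\<close>.\<close>

lemma first_passage_add: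
  "first_passage p (a + b) n = (\<Sum>j\<le>n. first_passage p a j * first_passage p b (n - j))"
proof (induction n arbitrary: a b)
  case 0
  then show ?case by simp
next
  case (Suc n)
  show ?case
  proof (cases a)
    case 0
    have "(\<Sum>j\<le>Suc n. first_passage p 0 j * first_passage p b (Suc n - j))
        = (\<Sum>j\<in>{0}. first_passage p 0 j * first_passage p b (Suc n - j))"
      by (intro sum.mono_neutral_right) (auto simp: first_passage_0_left)
    then show ?thesis using 0 by simp
  next
    case (Suc a')
    have "(\<Sum>j\<le>Suc n. first_passage p a j * first_passage p b (Suc n - j))
        = (\<Sum>j\<le>n. first_passage p a (Suc j) * first_passage p b (n - j))"
      by (subst sum.atMost_Suc_shift) (simp add: Suc)
    also have "\<dots> = (\<Sum>j\<le>n. (\<Sum>y\<le>n. p y * first_passage p (a' + y) j) * first_passage p b (n - j))"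
    proof (intro sum.cong refl)
      fix j assume "j \<in> {..n}"
      then show "first_passage p a (Suc j) * first_passage p b (n - j)
          = (\<Sum>y\<le>n. p y * first_passage p (a' + y) j) * first_passage p b (n - j)"
        using first_passage_Suc_Suc_atMost[of j n p a'] by (simp add: Suc)
    qed
    also have "\<dots> = (\<Sum>y\<le>n. p y * (\<Sum>j\<le>n. first_passage p (a' + y) j * first_passage p b (n - j)))"
      by (simp add: sum_distrib_left sum_distrib_right mult.assoc) (rule sum.swap)
    also have "\<dots> = (\<Sum>y\<le>n. p y * first_passage p (a' + b + y) n)"
      by (intro sum.cong refl) (use Suc.IH[of "a' + _" b] in \<open>simp add: ac_simps\<close>)
    also have "\<dots> = first_passage p (a + b) (Suc n)"
      by (simp add: Suc)
    finally show ?thesis ..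
  qed
qed

definition passage_within :: "(nat \<Rightarrow> real) \<Rightarrow> nat \<Rightarrow> nat \<Rightarrow> real" where
  "passage_within p m N = (\<Sum>n\<le>N. first_passage p m n)"

lemma passage_within_0_left: "passage_within p 0 N = 1"
proof -
  have "passage_within p 0 N = (\<Sum>n\<in>{0}. first_passage p 0 n)"
    unfolding passage_within_def
    by (intro sum.mono_neutral_right) (auto simp: first_passage_0_left)
  then show ?thesis by simp
qed

lemma passage_within_Suc_Suc:
  "passage_within p (Suc m) (Suc N) = (\<Sum>y\<le>N. p y * passage_within p (m + y) N)"
proof -
  have "passage_within p (Suc m) (Suc N) = (\<Sum>n\<le>N. first_passage p (Suc m) (Suc n))"
    unfolding passage_within_def by (subst sum.atMost_Suc_shift) simp
  also have "\<dots> = (\<Sum>n\<le>N. \<Sum>y\<le>N. p y * first_passage p (m + y) n)"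
    by (intro sum.cong refl first_passage_Suc_Suc_atMost) auto
  also have "\<dots> = (\<Sum>y\<le>N. p y * passage_within p (m + y) N)"
    unfolding passage_within_def by (subst sum.swap) (simp add: sum_distrib_left)
  finally show ?thesis .
qed

lemma passage_within_le_1:
  assumes nonneg: "\<And>y. 0 \<le> p y" and sums_1: "p sums 1"
  shows "passage_within p m N \<le> 1"
proof (induction N arbitrary: m)
  case 0
  then show ?case by (simp add: passage_within_def)
next
  case (Suc N)
  show ?case
  proof (cases m)
    case 0
    then show ?thesis by (simp add: passage_within_0_left)
  next
    case (Suc m')
    have "passage_within p m (Suc N) = (\<Sum>y\<le>N. p y * passage_within p (m' + y) N)"
      by (simp add: Suc passage_within_Suc_Suc)
    also have "\<dots> \<le> (\<Sum>y\<le>N. p y)"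
      by (intro sum_mono mult_left_le) (auto simp: nonneg Suc.IH)
    also have "\<dots> \<le> 1"
      using sums_1 nonneg by (metis sum_le_suminf sums_iff finite_atMost)
    finally show ?thesis .
  qed
qed

lemma one_le_exp_moment:
  fixes p :: "nat \<Rightarrow> real" and r \<rho> :: real
  assumes nonneg: "\<And>y. 0 \<le> p y" and sums_1: "p sums 1" and r_ge_1: "1 \<le> r"
    and exp_moment: "(\<lambda>y. p y * r ^ y) sums (r * \<rho>)"
  shows "1 \<le> r * \<rho>"
proof (rule sums_le[OF _ sums_1 exp_moment])
  show "p y \<le> p y * r ^ y" for y
    using mult_left_mono[OF one_le_power[OF r_ge_1] nonneg[of y], of y] by simp
qed

text \<open>A Chernoff bound: one slot multiplies the expectation of \<open>r ^ backlog\<close> by \<open>\<rho>\<close>.\<close>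

lemma one_minus_passage_within_le:
  assumes nonneg: "\<And>y. 0 \<le> p y" and sums_1: "p sums 1" and r_ge_1: "1 \<le> r"
    and exp_moment: "(\<lambda>y. p y * r ^ y) sums (r * \<rho>)"
  shows "1 - passage_within p m N \<le> r ^ m * \<rho> ^ N"
proof -
  have r_\<rho>_ge_1: "1 \<le> r * \<rho>"
    by (rule one_le_exp_moment[OF assms])
  then have \<rho>_nonneg: "0 \<le> \<rho>"
    using r_ge_1 zero_le_mult_iff[of r \<rho>] by auto
  show ?thesis
  proof (induction N arbitrary: m)
    case 0
    then show ?case using r_ge_1 by (simp add: passage_within_def)
  next
    case (Suc N)
    show ?case
    proof (cases m)
      case 0
      then show ?thesis using \<rho>_nonneg r_ge_1 by (simp add: passage_within_0_left)
    next
      case (Suc m')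
      define h where "h y = p y * (if y \<le> N then 1 - passage_within p (m' + y) N else 1)" for y
      have "(\<lambda>y. p y * (if y \<le> N then passage_within p (m' + y) N else 0))
          sums (\<Sum>y\<le>N. p y * passage_within p (m' + y) N)"
        using sums_finite[of "{..N}" "\<lambda>y. p y * (if y \<le> N then passage_within p (m' + y) N else 0)"]
        by simp
      from sums_diff[OF sums_1 this]
      have "(\<lambda>y. p y - p y * (if y \<le> N then passage_within p (m' + y) N else 0))
          sums (1 - passage_within p m (Suc N))"
        by (simp add: Suc passage_within_Suc_Suc)
      also have "(\<lambda>y. p y - p y * (if y \<le> N then passage_within p (m' + y) N else 0)) = h"
        by (auto simp: h_def fun_eq_iff right_diff_distrib)
      finally have h_sums: "h sums (1 - passage_within p m (Suc N))" .
      have bound_sums: "(\<lambda>y. (r ^ m' * \<rho> ^ N) * (p y * r ^ y)) sums ((r ^ m' * \<rho> ^ N) * (r * \<rho>))"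
        by (intro sums_mult exp_moment)
      have "h y \<le> (r ^ m' * \<rho> ^ N) * (p y * r ^ y)" for y
      proof (cases "y \<le> N")
        case True
        then have "h y = p y * (1 - passage_within p (m' + y) N)" by (simp add: h_def)
        also have "\<dots> \<le> p y * (r ^ (m' + y) * \<rho> ^ N)"
          by (intro mult_left_mono Suc.IH nonneg)
        finally show ?thesis by (simp add: power_add ac_simps)
      next
        case False
        have "1 \<le> r ^ (m' + y - N) * (r * \<rho>) ^ N"
          using mult_mono[OF one_le_power[OF r_ge_1] one_le_power[OF r_\<rho>_ge_1]] r_ge_1 by simp
        also have "\<dots> = r ^ (m' + y) * \<rho> ^ N"
          using False by (simp add: power_mult_distrib mult.assoc power_add[symmetric])
        finally have "p y * 1 \<le> p y * (r ^ (m' + y) * \<rho> ^ N)"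
          by (intro mult_left_mono nonneg)
        then show ?thesis using False by (simp add: h_def power_add ac_simps)
      qed
      from sums_le[OF this h_sums bound_sums] show ?thesis by (simp add: Suc ac_simps)
    qed
  qed
qed


lemma summable_Suc_power2_mult_geometric:
  fixes x :: real
  assumes "0 \<le> x" "x < 1"
  shows "summable (\<lambda>n. (real n + 1) ^ 2 * x ^ n)"
proof -
  have geometric: "summable (\<lambda>n. (\<lambda>_. 1) n * z ^ n)" if "norm z < 1" for z :: real
    using summable_geometric[OF that] by simp
  have "summable (\<lambda>n. diffs (diffs (\<lambda>_. 1)) n * x ^ n)"
    by (rule termdiff_converges[of x 1]) (use assms termdiff_converges[OF _ geometric] in auto)
  then show ?thesis
  proof (rule summable_comparison_test[rotated], intro exI allI impI)
    fix n :: nat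
    have "(real n + 1) ^ 2 * x ^ n \<le> ((real n + 1) * (real n + 2)) * x ^ n"
      using assms by (intro mult_right_mono) (auto simp: power2_eq_square)
    then show "norm ((real n + 1) ^ 2 * x ^ n) \<le> diffs (diffs (\<lambda>_. 1)) n * x ^ n"
      using assms by (simp add: diffs_def algebra_simps)
  qed
qed

lemma sums_lower_triangle_nonneg:
  fixes a :: "nat \<Rightarrow> nat \<Rightarrow> real"
  assumes nonneg: "\<And>y n. 0 \<le> a y n" and upper_0: "\<And>y n. n < y \<Longrightarrow> a y n = 0"
    and rows: "\<And>y. a y sums S y" and "summable S"
  shows "(\<lambda>n. \<Sum>y\<le>n. a y n) sums (\<Sum>y. S y)"
proof -
  have columns: "(\<lambda>y. a y n) sums (\<Sum>y\<le>n. a y n)" for n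
    using upper_0 by (intro sums_finite) auto
  have S_nonneg: "0 \<le> S y" for y
    using rows[of y] nonneg by (metis sums_iff suminf_nonneg)
  have "(\<Sum>n. ennreal (\<Sum>y\<le>n. a y n)) = (\<Sum>n. \<Sum>y. ennreal (a y n))"
    by (intro suminf_cong) (rule suminf_ennreal_eq[OF nonneg columns, symmetric])
  also have "\<dots> = (\<Sum>y. \<Sum>n. ennreal (a y n))"
    using nn_integral_suminf[of "\<lambda>y n. ennreal (a y n)" "count_space UNIV"]
    by (simp add: nn_integral_count_space_nat)
  also have "\<dots> = (\<Sum>y. ennreal (S y))"
    by (intro suminf_cong) (rule suminf_ennreal_eq[OF nonneg rows])
  also have "\<dots> = ennreal (\<Sum>y. S y)"
    using S_nonneg \<open>summable S\<close> by (simp add: suminf_ennreal2)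
  finally have "(\<lambda>n. ennreal (\<Sum>y\<le>n. a y n)) sums ennreal (\<Sum>y. S y)"
    by (metis summableI summable_sums)
  then show ?thesis
    using nonneg S_nonneg \<open>summable S\<close>
    by (subst (asm) sums_ennreal) (auto intro!: sum_nonneg suminf_nonneg)
qed

definition passage_from :: "(nat \<Rightarrow> real) \<Rightarrow> (nat \<Rightarrow> real) \<Rightarrow> nat \<Rightarrow> real" where
  "passage_from p q n = (\<Sum>y\<le>n. q y * first_passage p y n)"

lemma first_passage_1_Suc: "first_passage p 1 (Suc n) = passage_from p p n"
  by (simp add: passage_from_def)

locale subcritical_arrivals =
  fixes p :: "nat \<Rightarrow> real" and r \<rho> :: real
  assumes nonneg: "\<And>y. 0 \<le> p y" and sums_1: "p sums 1" and r_ge_1: "1 \<le> r"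
    and exp_moment: "(\<lambda>y. p y * r ^ y) sums (r * \<rho>)" and \<rho>_less_1: "\<rho> < 1"
begin

lemma first_passage_nonneg': "0 \<le> first_passage p m n"
  by (rule first_passage_nonneg[OF nonneg])

lemma \<rho>_nonneg: "0 \<le> \<rho>"
  using one_le_exp_moment[OF nonneg sums_1 r_ge_1 exp_moment] r_ge_1 zero_le_mult_iff[of r \<rho>]
  by auto

lemma first_passage_sums_1: "(\<lambda>n. first_passage p m n) sums 1"
  unfolding sums_def_le passage_within_def[symmetric]
proof (rule real_tendsto_sandwich)
  show "\<forall>\<^sub>F N in sequentially. 1 - r ^ m * \<rho> ^ N \<le> passage_within p m N"
    using one_minus_passage_within_le[OF nonneg sums_1 r_ge_1 exp_moment] by (auto simp: algebra_simps)
  show "\<forall>\<^sub>F N in sequentially. passage_within p m N \<le> 1"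
    using passage_within_le_1[OF nonneg sums_1] by auto
  have "(\<lambda>N. 1 - r ^ m * \<rho> ^ N) \<longlonglongrightarrow> 1 - r ^ m * 0"
    using \<rho>_nonneg \<rho>_less_1 by (intro tendsto_intros) auto
  then show "(\<lambda>N. 1 - r ^ m * \<rho> ^ N) \<longlonglongrightarrow> 1" by simp
qed simp

lemma first_passage_Suc_le: "first_passage p m (Suc N) \<le> r ^ m * \<rho> ^ N"
proof -
  have "passage_within p m (Suc N) = passage_within p m N + first_passage p m (Suc N)"
    by (simp add: passage_within_def)
  with passage_within_le_1[OF nonneg sums_1, of m "Suc N"]
    one_minus_passage_within_le[OF nonneg sums_1 r_ge_1 exp_moment, of m N]
  show ?thesis by linarith
qed

lemma summable_power2_first_passage: "summable (\<lambda>n. real n ^ 2 * first_passage p m n)"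
proof -
  have "summable (\<lambda>n. r ^ m * ((real n + 1) ^ 2 * \<rho> ^ n))"
    by (intro summable_mult summable_Suc_power2_mult_geometric \<rho>_nonneg \<rho>_less_1)
  then have "summable (\<lambda>n. real (Suc n) ^ 2 * first_passage p m (Suc n))"
  proof (rule summable_comparison_test[rotated], intro exI allI impI)
    fix n :: nat
    have "real (Suc n) ^ 2 * first_passage p m (Suc n) \<le> real (Suc n) ^ 2 * (r ^ m * \<rho> ^ n)"
      by (intro mult_left_mono first_passage_Suc_le) auto
    then show "norm (real (Suc n) ^ 2 * first_passage p m (Suc n)) \<le> r ^ m * ((real n + 1) ^ 2 * \<rho> ^ n)"
      using first_passage_nonneg' by (simp add: ac_simps)
  qed
  then show ?thesis by (subst (asm) summable_Suc_iff)
qed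

lemma summable_mult_first_passage: "summable (\<lambda>n. real n * first_passage p m n)"
proof (rule summable_comparison_test[OF _ summable_power2_first_passage], intro exI allI impI)
  fix n :: nat
  have "real n \<le> real n ^ 2" by (cases n) (auto simp: power2_eq_square)
  then show "norm (real n * first_passage p m n) \<le> real n ^ 2 * first_passage p m n"
    using first_passage_nonneg' by (simp add: mult_right_mono)
qed

definition passage_mean :: real where
  "passage_mean = (\<Sum>n. real n * first_passage p 1 n)"

definition passage_moment2 :: real where
  "passage_moment2 = (\<Sum>n. real n ^ 2 * first_passage p 1 n)"

lemma sums_mult_first_passage_add:
  "(\<lambda>n. real n * first_passage p (a + b) n) sums
     ((\<Sum>n. real n * first_passage p a n) + (\<Sum>n. real n * first_passage p b n))"
proof -
  let ?F = "first_passage p"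
  have abs_summable: "summable (\<lambda>n. norm (real n * ?F c n))" "summable (\<lambda>n. norm (?F c n))" for c
    using summable_mult_first_passage first_passage_sums_1 first_passage_nonneg'
    by (auto simp: sums_iff)
  have "(\<lambda>n. (\<Sum>i\<le>n. (real i * ?F a i) * ?F b (n - i)) + (\<Sum>i\<le>n. ?F a i * (real (n - i) * ?F b (n - i))))
     sums ((\<Sum>n. real n * ?F a n) * (\<Sum>n. ?F b n) + (\<Sum>n. ?F a n) * (\<Sum>n. real n * ?F b n))"
    by (intro sums_add Cauchy_product_sums abs_summable)
  also have "(\<lambda>n. (\<Sum>i\<le>n. (real i * ?F a i) * ?F b (n - i)) + (\<Sum>i\<le>n. ?F a i * (real (n - i) * ?F b (n - i))))
      = (\<lambda>n. real n * ?F (a + b) n)"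
    unfolding first_passage_add sum_distrib_left sum.distrib[symmetric]
    by (intro ext sum.cong refl) (auto simp: of_nat_diff algebra_simps)
  finally show ?thesis using first_passage_sums_1 by (simp add: sums_iff)
qed

lemma sums_power2_first_passage_add:
  "(\<lambda>n. real n ^ 2 * first_passage p (a + b) n) sums
     ((\<Sum>n. real n ^ 2 * first_passage p a n)
       + 2 * (\<Sum>n. real n * first_passage p a n) * (\<Sum>n. real n * first_passage p b n)
       + (\<Sum>n. real n ^ 2 * first_passage p b n))"
proof -
  let ?F = "first_passage p"
  have abs_summable: "summable (\<lambda>n. norm (real n ^ 2 * ?F c n))"
    "summable (\<lambda>n. norm (real n * ?F c n))" "summable (\<lambda>n. norm (?F c n))" for c
    using summable_power2_first_passage summable_mult_first_passage first_passage_sums_1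
      first_passage_nonneg'
    by (auto simp: sums_iff)
  have "(\<lambda>n. (\<Sum>i\<le>n. (real i ^ 2 * ?F a i) * ?F b (n - i))
          + 2 * (\<Sum>i\<le>n. (real i * ?F a i) * (real (n - i) * ?F b (n - i)))
          + (\<Sum>i\<le>n. ?F a i * (real (n - i) ^ 2 * ?F b (n - i))))
     sums ((\<Sum>n. real n ^ 2 * ?F a n) * (\<Sum>n. ?F b n)
           + 2 * ((\<Sum>n. real n * ?F a n) * (\<Sum>n. real n * ?F b n))
           + (\<Sum>n. ?F a n) * (\<Sum>n. real n ^ 2 * ?F b n))"
    by (intro sums_add sums_mult Cauchy_product_sums abs_summable)
  also have "(\<lambda>n. (\<Sum>i\<le>n. (real i ^ 2 * ?F a i) * ?F b (n - i))
          + 2 * (\<Sum>i\<le>n. (real i * ?F a i) * (real (n - i) * ?F b (n - i)))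
          + (\<Sum>i\<le>n. ?F a i * (real (n - i) ^ 2 * ?F b (n - i))))
      = (\<lambda>n. real n ^ 2 * ?F (a + b) n)"
    unfolding first_passage_add sum_distrib_left sum.distrib[symmetric]
    by (intro ext sum.cong refl) (auto simp: of_nat_diff power2_eq_square algebra_simps)
  finally show ?thesis using first_passage_sums_1 by (simp add: sums_iff)
qed

lemma sums_mult_first_passage: "(\<lambda>n. real n * first_passage p m n) sums (real m * passage_mean)"
proof (induction m)
  case 0
  have "(\<lambda>n. real n * first_passage p 0 n) = (\<lambda>_. 0)"
    by (auto simp: first_passage_0_left)
  then show ?case by simp
next
  case (Suc m)
  then show ?case
    using sums_mult_first_passage_add[of m 1] by (simp add: sums_iff passage_mean_def algebra_simps)
qed

lemma sums_power2_first_passage: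
  "(\<lambda>n. real n ^ 2 * first_passage p m n) sums
     (real m * passage_moment2 + real m * (real m - 1) * passage_mean ^ 2)"
proof (induction m)
  case 0
  have "(\<lambda>n. real n ^ 2 * first_passage p 0 n) = (\<lambda>_. 0)"
    by (auto simp: first_passage_0_left)
  then show ?case by simp
next
  case (Suc m)
  then show ?case
    using sums_power2_first_passage_add[of m 1] sums_mult_first_passage[of m]
    by (simp add: sums_iff passage_mean_def passage_moment2_def power2_eq_square algebra_simps)
qed

lemma sums_mixture_first_passage:
  assumes w_nonneg: "\<And>n. 0 \<le> w n" and q_nonneg: "\<And>y. 0 \<le> q y"
    and rows: "\<And>y. (\<lambda>n. w n * first_passage p y n) sums S y"
    and mixture: "(\<lambda>y. q y * S y) sums T"
  shows "(\<lambda>n. w n * passage_from p q n) sums T"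
proof -
  have "(\<lambda>n. \<Sum>y\<le>n. q y * (w n * first_passage p y n)) sums (\<Sum>y. q y * S y)"
  proof (rule sums_lower_triangle_nonneg)
    show "0 \<le> q y * (w n * first_passage p y n)" for y n
      using q_nonneg w_nonneg first_passage_nonneg' by simp
    show "(\<lambda>n. q y * (w n * first_passage p y n)) sums (q y * S y)" for y
      by (intro sums_mult rows)
  qed (use mixture in \<open>auto simp: first_passage_eq_0 sums_iff\<close>)
  then show ?thesis
    using mixture by (simp add: passage_from_def sum_distrib_left sums_iff ac_simps)
qed

lemma sums_passage_from:
  assumes "\<And>y. 0 \<le> q y" "q sums Q0"
  shows "passage_from p q sums Q0"
  using sums_mixture_first_passage[of "\<lambda>_. 1" q "\<lambda>_. 1"] assms first_passage_sums_1 by simp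

lemma sums_mean_passage_from:
  assumes "\<And>y. 0 \<le> q y" "q sums Q0" "(\<lambda>y. real y * q y) sums Q1"
  shows "(\<lambda>n. (real n + 1) * passage_from p q n) sums (Q0 + passage_mean * Q1)"
proof (rule sums_mixture_first_passage)
  show "(\<lambda>n. (real n + 1) * first_passage p y n) sums (real y * passage_mean + 1)" for y
    using sums_add[OF sums_mult_first_passage first_passage_sums_1] by (simp add: algebra_simps)
  show "(\<lambda>y. q y * (real y * passage_mean + 1)) sums (Q0 + passage_mean * Q1)"
    using sums_add[OF sums_mult[OF assms(3), of passage_mean] assms(2)] by (simp add: algebra_simps)
qed (use assms in auto)

lemma sums_moment2_passage_from:
  assumes "\<And>y. 0 \<le> q y" "q sums Q0" "(\<lambda>y. real y * q y) sums Q1"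
    and "(\<lambda>y. real y * (real y - 1) * q y) sums Q2"
  shows "(\<lambda>n. (real n + 1) ^ 2 * passage_from p q n) sums
    (Q0 + (2 * passage_mean + passage_moment2) * Q1 + passage_mean ^ 2 * Q2)"
proof (rule sums_mixture_first_passage)
  let ?S = "\<lambda>y. real y * passage_moment2 + real y * (real y - 1) * passage_mean ^ 2
    + 2 * (real y * passage_mean) + 1"
  show "(\<lambda>n. (real n + 1) ^ 2 * first_passage p y n) sums ?S y" for y
  proof -
    have "(\<lambda>n. real n ^ 2 * first_passage p y n + 2 * (real n * first_passage p y n)
        + first_passage p y n) sums ?S y"
      by (intro sums_add sums_mult sums_power2_first_passage sums_mult_first_passage
          first_passage_sums_1)
    then show ?thesis by (simp add: power2_eq_square algebra_simps)
  qed
  have "(\<lambda>y. passage_moment2 * (real y * q y) + passage_mean ^ 2 * (real y * (real y - 1) * q y)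
      + (2 * passage_mean) * (real y * q y) + q y)
    sums (passage_moment2 * Q1 + passage_mean ^ 2 * Q2 + 2 * passage_mean * Q1 + Q0)"
    by (intro sums_add sums_mult assms)
  then show "(\<lambda>y. q y * ?S y) sums (Q0 + (2 * passage_mean + passage_moment2) * Q1
      + passage_mean ^ 2 * Q2)"
    by (simp add: algebra_simps)
qed (use assms in auto)

text \<open>First-step analysis: a backlog of one is worked off after one slot plus a passage
  from the arrivals of that slot.\<close>

lemma passage_mean_eq:
  assumes mean: "(\<lambda>y. real y * p y) sums lam" and "lam < 1"
  shows "passage_mean = 1 / (1 - lam)"
proof -
  have "(\<lambda>n. real (Suc n) * first_passage p 1 (Suc n)) sums (1 + passage_mean * lam)"
    unfolding first_passage_1_Suc using sums_mean_passage_from[OF nonneg sums_1 mean]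
    by (simp add: ac_simps)
  moreover have "(\<lambda>n. real (Suc n) * first_passage p 1 (Suc n)) sums passage_mean"
    using sums_mult_first_passage[of 1] by (subst sums_Suc_iff) simp
  ultimately have "passage_mean = 1 + passage_mean * lam"
    by (simp add: sums_iff)
  then show ?thesis using \<open>lam < 1\<close> by (simp add: field_simps)
qed

lemma passage_moment2_eq:
  assumes mean: "(\<lambda>y. real y * p y) sums lam" and "lam < 1"
    and factorial_moment: "(\<lambda>y. real y * (real y - 1) * p y) sums \<sigma>"
  shows "passage_moment2 = (1 - lam ^ 2 + \<sigma>) / (1 - lam) ^ 3"
proof -
  have "(\<lambda>n. real (Suc n) ^ 2 * first_passage p 1 (Suc n)) sums
      (1 + (2 * passage_mean + passage_moment2) * lam + passage_mean ^ 2 * \<sigma>)"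
    unfolding first_passage_1_Suc
    using sums_moment2_passage_from[OF nonneg sums_1 mean factorial_moment]
    by (simp add: ac_simps)
  moreover have "(\<lambda>n. real (Suc n) ^ 2 * first_passage p 1 (Suc n)) sums passage_moment2"
    using sums_power2_first_passage[of 1] by (subst sums_Suc_iff) simp
  ultimately have "passage_moment2 = 1 + (2 * passage_mean + passage_moment2) * lam
      + passage_mean ^ 2 * \<sigma>"
    by (simp add: sums_iff)
  then have "passage_moment2 * (1 - lam) = 1 + 2 * passage_mean * lam + passage_mean ^ 2 * \<sigma>"
    by (simp add: algebra_simps)
  also have "\<dots> = (1 - lam ^ 2 + \<sigma>) / (1 - lam) ^ 2"
  proof -
    define d where "d = 1 - lam"
    have "d \<noteq> 0" and lam: "lam = 1 - d" using \<open>lam < 1\<close> by (auto simp: d_def)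
    then show ?thesis
      unfolding passage_mean_eq[OF mean \<open>lam < 1\<close>] d_def[symmetric] lam
      by (simp add: field_simps power2_eq_square)
  qed
  finally have "passage_moment2 = (1 - lam ^ 2 + \<sigma>) / (1 - lam) ^ 2 / (1 - lam)"
    using \<open>lam < 1\<close> by (simp add: eq_divide_eq ac_simps)
  then show ?thesis
    by (simp add: power_Suc2[symmetric] numeral_3_eq_3)
qed

end


definition poisson :: "real \<Rightarrow> nat \<Rightarrow> real" where
  "poisson lam y = lam ^ y / fact y * exp (- lam)"

lemma poisson_nonneg: "0 \<le> lam \<Longrightarrow> 0 \<le> poisson lam y"
  by (simp add: poisson_def)

lemma poisson_0: "poisson lam 0 = exp (- lam)"
  by (simp add: poisson_def)

lemma poisson_Suc: "poisson lam (Suc y) = lam / real (Suc y) * poisson lam y"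
  by (simp add: poisson_def field_simps)

lemma sums_poisson_mult_power: "(\<lambda>y. poisson lam y * r ^ y) sums exp (lam * (r - 1))"
proof -
  have "(\<lambda>y. (lam * r) ^ y / fact y * exp (- lam)) sums (exp (lam * r) * exp (- lam))"
    using exp_converges[of "lam * r"] by (intro sums_mult2) (simp add: divide_inverse ac_simps)
  then show ?thesis
    by (simp add: poisson_def exp_add[symmetric] power_mult_distrib algebra_simps)
qed

lemma sums_poisson: "poisson lam sums 1"
  using sums_poisson_mult_power[of lam 1] by simp

lemma sums_mult_poisson: "(\<lambda>y. real y * poisson lam y) sums lam"
proof -
  have "(\<lambda>y. real (Suc y) * poisson lam (Suc y)) sums lam"
    using sums_mult[OF sums_poisson, of lam] by (simp add: poisson_Suc del: of_nat_Suc)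
  then show ?thesis by (subst (asm) sums_Suc_iff) simp
qed

lemma sums_factorial_moment_poisson: "(\<lambda>y. real y * (real y - 1) * poisson lam y) sums lam ^ 2"
proof -
  have "(\<lambda>y. real (Suc y) * (real (Suc y) - 1) * poisson lam (Suc y))
      = (\<lambda>y. lam * (real y * poisson lam y))"
    by (auto simp: poisson_Suc fun_eq_iff simp del: of_nat_Suc)
  then have "(\<lambda>y. real (Suc y) * (real (Suc y) - 1) * poisson lam (Suc y)) sums lam ^ 2"
    using sums_mult[OF sums_mult_poisson, of lam] by (simp add: power2_eq_square)
  then show ?thesis by (subst (asm) sums_Suc_iff) simp
qed

text \<open>The optimal exponential moment is at \<open>r = 1 / lam\<close>, where \<open>\<rho> = lam * exp (1 - lam) < 1\<close>.\<close>

lemma subcritical_arrivals_poisson: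
  assumes "0 \<le> lam" "lam < 1"
  obtains r \<rho> where "subcritical_arrivals (poisson lam) r \<rho>"
proof (cases "lam = 0")
  case True
  have "subcritical_arrivals (poisson lam) 2 (1 / 2)"
    by unfold_locales
      (use True sums_poisson_mult_power[of lam 2] assms in \<open>auto simp: poisson_nonneg sums_poisson\<close>)
  then show ?thesis by (rule that)
next
  case False
  then have "0 < lam" using assms by simp
  have "lam < exp (lam - 1)"
    using exp_minus_greater[of "1 - lam"] assms by simp
  then have "lam * exp (1 - lam) < exp (lam - 1) * exp (1 - lam)"
    by (intro mult_strict_right_mono) auto
  then have "lam * exp (1 - lam) < 1"
    by (simp add: exp_add[symmetric])
  moreover have "exp (lam * (1 / lam - 1)) = 1 / lam * (lam * exp (1 - lam))"
    using \<open>0 < lam\<close> by (simp add: field_simps)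
  ultimately have "subcritical_arrivals (poisson lam) (1 / lam) (lam * exp (1 - lam))"
    by unfold_locales
      (use sums_poisson_mult_power[of lam "1 / lam"] assms \<open>0 < lam\<close> in
        \<open>auto simp: poisson_nonneg sums_poisson\<close>)
  then show ?thesis by (rule that)
qed

lemma sum_binomial_power: "(\<Sum>k\<le>K. (K choose k) * a ^ (K - k)) = (a + 1 :: nat) ^ K"
  using binomial_ring[of 1 a K] by (simp add: add.commute)

lemma sum_binomial_mult_power:
  "(\<Sum>k\<le>K. (K choose k) * k * a ^ (K - k)) = K * (a + 1 :: nat) ^ (K - 1)"
proof (cases K)
  case 0
  then show ?thesis by simp
next
  case (Suc K')
  have "(\<Sum>k\<le>Suc K'. (Suc K' choose k) * k * a ^ (Suc K' - k))
      = (\<Sum>k\<le>K'. (Suc K' choose Suc k) * Suc k * a ^ (K' - k))"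
    by (subst sum.atMost_Suc_shift) simp
  also have "\<dots> = (\<Sum>k\<le>K'. Suc K' * ((K' choose k) * a ^ (K' - k)))"
    by (intro sum.cong refl) (subst Suc_times_binomial_eq[symmetric], simp only: mult.assoc)
  also have "\<dots> = Suc K' * (a + 1) ^ K'"
    by (simp only: sum_distrib_left[symmetric] sum_binomial_power)
  finally show ?thesis by (simp add: Suc)
qed

lemma abel_type_binomial_identity:
  assumes "m + K = n"
  shows "(n + 1) * (\<Sum>y\<le>K. (K choose y) * (m + y) * n ^ (K - y)) = n * (m + 1) * (n + 1 :: nat) ^ K"
proof -
  have "(\<Sum>y\<le>K. (K choose y) * (m + y) * n ^ (K - y))
      = m * (\<Sum>y\<le>K. (K choose y) * n ^ (K - y)) + (\<Sum>y\<le>K. (K choose y) * y * n ^ (K - y))"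
    by (simp add: sum_distrib_left sum.distrib[symmetric] algebra_simps)
  also have "\<dots> = m * (n + 1) ^ K + K * (n + 1) ^ (K - 1)"
    by (simp add: sum_binomial_power sum_binomial_mult_power)
  finally have sum_eq: "(\<Sum>y\<le>K. (K choose y) * (m + y) * n ^ (K - y))
      = m * (n + 1) ^ K + K * (n + 1) ^ (K - 1)" .
  show ?thesis
  proof (cases K)
    case 0
    then show ?thesis using assms sum_eq by simp
  next
    case (Suc K')
    have "(n + 1) * (m * (n + 1) ^ K + K * (n + 1) ^ (K - 1)) = (n + 1) ^ K * (m * (n + 1) + K)"
      by (simp add: Suc algebra_simps)
    also have "m * (n + 1) + K = n * (m + 1)"
      using assms by (simp add: algebra_simps)
    finally show ?thesis using sum_eq by (simp add: algebra_simps)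
  qed
qed

lemma sum_binomial_Suc_mult_power: "(\<Sum>y\<le>n. (Suc n choose Suc y) * y * n ^ (n - y)) = n ^ Suc n"
proof -
  define g :: "nat \<Rightarrow> int" where "g j = int (Suc n choose j) * (int j - 1) * int n ^ (Suc n - j)" for j
  have "(\<Sum>j\<le>Suc n. g j) = (\<Sum>j\<le>Suc n. int ((Suc n choose j) * j * n ^ (Suc n - j)))
      - (\<Sum>j\<le>Suc n. int ((Suc n choose j) * n ^ (Suc n - j)))"
    unfolding sum_subtractf[symmetric] by (intro sum.cong refl) (simp add: g_def algebra_simps)
  also have "\<dots> = 0"
    by (simp only: of_nat_sum[symmetric] sum_binomial_power sum_binomial_mult_power) simp
  finally have "g 0 + (\<Sum>y\<le>n. g (Suc y)) = 0"
    by (simp only: sum.atMost_Suc_shift)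
  then have "int (\<Sum>y\<le>n. (Suc n choose Suc y) * y * n ^ (n - y)) = int (n ^ Suc n)"
    by (simp add: g_def)
  then show ?thesis by (simp only: of_nat_eq_iff)
qed

definition borel_tanner :: "real \<Rightarrow> nat \<Rightarrow> nat \<Rightarrow> real" where
  "borel_tanner lam m n =
    (if m \<le> n then real m * real n ^ (n - m) * lam ^ (n - m) * exp (- real n * lam) / (real n * fact (n - m))
     else 0)"

lemma borel_tanner_Suc_Suc:
  assumes "1 \<le> n" "m \<le> n"
  shows "(\<Sum>y\<le>n. poisson lam y * borel_tanner lam (m + y) n) = borel_tanner lam (Suc m) (Suc n)"
proof -
  define K where "K = n - m"
  have Kn: "m + K = n" using assms by (simp add: K_def)
  define c where "c = lam ^ K * exp (- (real n + 1) * lam) / (real n * fact K)"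
  have "(\<Sum>y\<le>n. poisson lam y * borel_tanner lam (m + y) n)
      = (\<Sum>y\<le>K. poisson lam y * borel_tanner lam (m + y) n)"
    using Kn by (intro sum.mono_neutral_right) (auto simp: borel_tanner_def)
  also have "\<dots> = (\<Sum>y\<le>K. c * real ((K choose y) * (m + y) * n ^ (K - y)))"
  proof (intro sum.cong refl)
    fix y assume "y \<in> {..K}"
    then have y: "y \<le> K" by simp
    have "fact K = (fact y * fact (K - y) * real (K choose y) :: real)"
      using binomial_fact_lemma[OF y] by (metis of_nat_fact of_nat_mult)
    moreover have "lam ^ K = lam ^ y * lam ^ (K - y)"
      using y by (simp add: power_add[symmetric])
    moreover have "exp (- (real n + 1) * lam) = exp (- lam) * exp (- real n * lam)"
      by (simp add: exp_add[symmetric] algebra_simps)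
    moreover have "n - (m + y) = K - y" using Kn by simp
    ultimately show "poisson lam y * borel_tanner lam (m + y) n
        = c * real ((K choose y) * (m + y) * n ^ (K - y))"
      using y Kn assms unfolding poisson_def borel_tanner_def c_def by (simp add: field_simps)
  qed
  also have "\<dots> = c * real (\<Sum>y\<le>K. (K choose y) * (m + y) * n ^ (K - y))"
    by (simp add: sum_distrib_left)
  also have "real (\<Sum>y\<le>K. (K choose y) * (m + y) * n ^ (K - y))
      = real n * ((real m + 1) * (real n + 1) ^ K) / (real n + 1)"
  proof -
    have "real ((n + 1) * (\<Sum>y\<le>K. (K choose y) * (m + y) * n ^ (K - y)))
        = real (n * (m + 1) * (n + 1) ^ K)"
      using abel_type_binomial_identity[OF Kn] by simp
    then show ?thesis by (simp add: field_simps)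
  qed
  also have "c * (real n * ((real m + 1) * (real n + 1) ^ K) / (real n + 1))
      = lam ^ K * exp (- (real n + 1) * lam) * ((real m + 1) * (real n + 1) ^ K)
        / ((real n + 1) * fact K)"
  proof -
    have "A / (real n * fact K) * (real n * Z / (real n + 1)) = A * Z / ((real n + 1) * fact K)" for A Z
      using assms by (simp add: field_simps add_pos_nonneg)
    then show ?thesis unfolding c_def .
  qed
  also have "\<dots> = borel_tanner lam (Suc m) (Suc n)"
    using assms by (simp add: borel_tanner_def K_def algebra_simps)
  finally show ?thesis .
qed

lemma first_passage_poisson: "1 \<le> n \<Longrightarrow> first_passage (poisson lam) m n = borel_tanner lam m n"
proof (induction n arbitrary: m rule: nat_induct_at_least)
  case base
  show ?case
    by (cases m; cases "m - 1") (auto simp: borel_tanner_def poisson_def)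
next
  case (Suc n)
  show ?case
  proof (cases m)
    case 0
    then show ?thesis by (simp add: borel_tanner_def)
  next
    case (Suc m')
    show ?thesis
    proof (cases "m' \<le> n")
      case True
      then show ?thesis
        using Suc.IH borel_tanner_Suc_Suc[OF Suc.hyps True] by (simp add: \<open>m = Suc m'\<close>)
    next
      case False
      then show ?thesis by (simp add: first_passage_eq_0 borel_tanner_def \<open>m = Suc m'\<close>)
    qed
  qed
qed


lemma sums_poisson_Suc: "(\<lambda>y. poisson lam (Suc y)) sums (1 - exp (- lam))"
  using sums_poisson[of lam] by (subst sums_Suc_iff) (simp add: poisson_0)

lemma sums_mult_poisson_Suc: "(\<lambda>y. real y * poisson lam (Suc y)) sums (lam - (1 - exp (- lam)))"
proof -
  have "(\<lambda>y. real (Suc y) * poisson lam (Suc y)) sums lam"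
    using sums_mult_poisson[of lam] by (subst sums_Suc_iff) simp
  from sums_diff[OF this sums_poisson_Suc[of lam]] show ?thesis by (simp add: algebra_simps)
qed

lemma sums_factorial_moment_poisson_Suc:
  "(\<lambda>y. real y * (real y - 1) * poisson lam (Suc y)) sums (lam ^ 2 - 2 * (lam - (1 - exp (- lam))))"
proof -
  have "(\<lambda>y. real (Suc y) * (real (Suc y) - 1) * poisson lam (Suc y)) sums lam ^ 2"
    using sums_factorial_moment_poisson[of lam] by (subst sums_Suc_iff) simp
  from sums_diff[OF this sums_mult[OF sums_mult_poisson_Suc[of lam], of 2]]
  show ?thesis by (simp add: algebra_simps)
qed

text \<open>Given \<open>Y 1 = y + 1\<close>, decoding happens one slot after a backlog of \<open>y\<close> has been worked off.\<close>

definition decode_time_pmf :: "real \<Rightarrow> nat \<Rightarrow> real" where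
  "decode_time_pmf lam x =
    (if x = 0 then exp (- lam) else passage_from (poisson lam) (\<lambda>y. poisson lam (Suc y)) (x - 1))"

lemma passage_from_poisson_Suc:
  "passage_from (poisson lam) (\<lambda>y. poisson lam (Suc y)) n
    = real n ^ n / fact (Suc n) * lam ^ Suc n * exp (- real (Suc n) * lam)"
proof (cases "n = 0")
  case True
  then show ?thesis by (simp add: passage_from_def poisson_def)
next
  case False
  define c where "c = lam ^ Suc n * exp (- real (Suc n) * lam) / (real n * fact (Suc n))"
  have "passage_from (poisson lam) (\<lambda>y. poisson lam (Suc y)) n
      = (\<Sum>y\<le>n. c * real ((Suc n choose Suc y) * y * n ^ (n - y)))"
    unfolding passage_from_def
  proof (intro sum.cong refl)
    fix y assume "y \<in> {..n}"
    then have y: "y \<le> n" by simp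
    have fact_eq: "fact (Suc n) = (fact (Suc y) * fact (n - y) * real (Suc n choose Suc y) :: real)"
      using binomial_fact_lemma[of "Suc y" "Suc n"] y
      by (metis Suc_le_mono diff_Suc_Suc of_nat_fact of_nat_mult)
    have power_eq: "lam ^ Suc n = lam ^ Suc y * lam ^ (n - y)"
      using y by (simp add: power_add[symmetric])
    have exp_eq: "exp (- real (Suc n) * lam) = exp (- lam) * exp (- real n * lam)"
      by (simp add: exp_add[symmetric] algebra_simps)
    have "real (Suc n choose Suc y) \<noteq> 0"
      using y by (simp del: binomial_Suc_Suc)
    moreover have bt: "first_passage (poisson lam) y n = borel_tanner lam y n"
      using False by (simp add: first_passage_poisson)
    ultimately show "poisson lam (Suc y) * first_passage (poisson lam) y n
        = c * real ((Suc n choose Suc y) * y * n ^ (n - y))"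
      using y False unfolding bt c_def fact_eq power_eq exp_eq poisson_def borel_tanner_def
      by (simp add: field_simps del: binomial_Suc_Suc fact_Suc power_Suc of_nat_Suc)
  qed
  also have "\<dots> = c * real n ^ Suc n"
    by (simp only: sum_distrib_left[symmetric] of_nat_sum[symmetric] sum_binomial_Suc_mult_power
        of_nat_power)
  also have "\<dots> = real n ^ n / fact (Suc n) * lam ^ Suc n * exp (- real (Suc n) * lam)"
    using False by (simp add: c_def field_simps del: of_nat_Suc)
  finally show ?thesis .
qed

lemma decode_time_pmf_eq:
  "decode_time_pmf lam x =
    (if x = 0 then exp (- lam)
     else if x = 1 then lam * exp (- lam)
     else real (x - 1) ^ (x - 2) / (real x * fact (x - 2)) * lam ^ x * exp (- real x * lam))"
proof -
  consider "x = 0" | "x = 1" | k where "x = Suc (Suc k)"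
    by (metis One_nat_def not0_implies_Suc)
  then show ?thesis
  proof cases
    case 3
    have "real (Suc k) ^ Suc k / fact (Suc (Suc k)) = real (Suc k) ^ k / (real (Suc (Suc k)) * fact k)"
      by (simp del: of_nat_Suc add: field_simps)
    then show ?thesis
      using 3 by (simp add: decode_time_pmf_def passage_from_poisson_Suc del: of_nat_Suc)
  qed (simp_all add: decode_time_pmf_def passage_from_poisson_Suc)
qed

lemma
  assumes "0 \<le> lam" "lam < 1"
  shows sums_passage_from_poisson_Suc:
      "passage_from (poisson lam) (\<lambda>y. poisson lam (Suc y)) sums (1 - exp (- lam))"
    and sums_mean_decode_time_pmf:
      "(\<lambda>x. real x * decode_time_pmf lam x) sums (lam / (1 - lam) * exp (- lam))"
    and sums_moment2_decode_time_pmf: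
      "(\<lambda>x. real x ^ 2 * decode_time_pmf lam x) sums
        ((1 - lam + lam ^ 2) / (1 - lam) ^ 2 * (lam / (1 - lam) * exp (- lam)))"
proof -
  obtain r \<rho> where "subcritical_arrivals (poisson lam) r \<rho>"
    using subcritical_arrivals_poisson[OF assms] .
  then interpret subcritical_arrivals "poisson lam" r \<rho> .
  let ?e = "exp (- lam)" and ?q = "\<lambda>y. poisson lam (Suc y)"
  have q_nonneg: "0 \<le> ?q y" for y
    using assms by (simp add: poisson_nonneg)
  have mean: "passage_mean = 1 / (1 - lam)"
    using passage_mean_eq[OF sums_mult_poisson \<open>lam < 1\<close>] .
  have moment2: "passage_moment2 = 1 / (1 - lam) ^ 3"
    using passage_moment2_eq[OF sums_mult_poisson \<open>lam < 1\<close> sums_factorial_moment_poisson] by simp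
  define d where "d = 1 - lam"
  have "d \<noteq> 0" and lam: "lam = 1 - d"
    using assms by (auto simp: d_def)
  show "passage_from (poisson lam) ?q sums (1 - ?e)"
    using sums_passage_from[OF q_nonneg sums_poisson_Suc] .
  have "(\<lambda>n. (real n + 1) * passage_from (poisson lam) ?q n)
      sums ((1 - ?e) + 1 / (1 - lam) * (lam - (1 - ?e)))"
    using sums_mean_passage_from[OF q_nonneg sums_poisson_Suc sums_mult_poisson_Suc]
    by (simp add: mean)
  also have "(1 - ?e) + 1 / (1 - lam) * (lam - (1 - ?e)) = lam / (1 - lam) * ?e"
    using \<open>d \<noteq> 0\<close> unfolding d_def[symmetric] lam by (simp add: field_simps)
  finally have "(\<lambda>n. real (Suc n) * decode_time_pmf lam (Suc n)) sums (lam / (1 - lam) * ?e)"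
    by (simp add: decode_time_pmf_def ac_simps)
  then show "(\<lambda>x. real x * decode_time_pmf lam x) sums (lam / (1 - lam) * ?e)"
    by (subst (asm) sums_Suc_iff) simp
  have "(\<lambda>n. (real n + 1) ^ 2 * passage_from (poisson lam) ?q n)
      sums ((1 - ?e) + (2 * (1 / (1 - lam)) + 1 / (1 - lam) ^ 3) * (lam - (1 - ?e))
        + (1 / (1 - lam)) ^ 2 * (lam ^ 2 - 2 * (lam - (1 - ?e))))"
    using sums_moment2_passage_from[OF q_nonneg sums_poisson_Suc sums_mult_poisson_Suc
        sums_factorial_moment_poisson_Suc]
    by (simp add: mean moment2)
  also have "(1 - ?e) + (2 * (1 / (1 - lam)) + 1 / (1 - lam) ^ 3) * (lam - (1 - ?e))
        + (1 / (1 - lam)) ^ 2 * (lam ^ 2 - 2 * (lam - (1 - ?e)))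
      = (1 - lam + lam ^ 2) / (1 - lam) ^ 2 * (lam / (1 - lam) * ?e)"
    using \<open>d \<noteq> 0\<close> unfolding d_def[symmetric] lam
    by (simp add: field_simps power2_eq_square power3_eq_cube)
  finally have "(\<lambda>n. real (Suc n) ^ 2 * decode_time_pmf lam (Suc n))
      sums ((1 - lam + lam ^ 2) / (1 - lam) ^ 2 * (lam / (1 - lam) * ?e))"
    by (simp add: decode_time_pmf_def ac_simps)
  then show "(\<lambda>x. real x ^ 2 * decode_time_pmf lam x)
      sums ((1 - lam + lam ^ 2) / (1 - lam) ^ 2 * (lam / (1 - lam) * ?e))"
    by (subst (asm) sums_Suc_iff) simp
qed


text \<open>A queue with backlog \<open>m\<close>, one departure per slot and arrivals \<open>ys\<close> is non-empty before
  each slot and empty after the last one.\<close>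

definition drains_at_end :: "nat \<Rightarrow> nat list \<Rightarrow> bool" where
  "drains_at_end m ys \<longleftrightarrow>
    (\<forall>j<length ys. j < m + sum_list (take j ys)) \<and> m + sum_list ys \<le> length ys"

lemma drains_at_end_Nil: "drains_at_end m [] \<longleftrightarrow> m = 0"
  by (simp add: drains_at_end_def)

lemma drains_at_end_Cons: "drains_at_end m (y # r) \<longleftrightarrow> 0 < m \<and> drains_at_end (m - 1 + y) r"
proof
  assume h: "drains_at_end m (y # r)"
  then have "0 < m" unfolding drains_at_end_def by force
  moreover have "j < m - 1 + y + sum_list (take j r)" if "j < length r" for j
    using h that \<open>0 < m\<close> unfolding drains_at_end_def by (auto dest!: spec[of _ "Suc j"])
  moreover have "m - 1 + y + sum_list r \<le> length r"
    using h \<open>0 < m\<close> by (simp add: drains_at_end_def, arith)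
  ultimately show "0 < m \<and> drains_at_end (m - 1 + y) r"
    by (simp add: drains_at_end_def)
next
  assume h: "0 < m \<and> drains_at_end (m - 1 + y) r"
  have "j < m + sum_list (take j (y # r))" if "j < Suc (length r)" for j
    using h that unfolding drains_at_end_def by (cases j) auto
  with h show "drains_at_end m (y # r)"
    unfolding drains_at_end_def by auto
qed

definition drain_lists :: "nat \<Rightarrow> nat \<Rightarrow> nat list set" where
  "drain_lists m n = {ys. length ys = n \<and> drains_at_end m ys}"

lemma finite_drain_lists: "finite (drain_lists m n)"
proof (rule finite_subset)
  show "drain_lists m n \<subseteq> {ys. set ys \<subseteq> {..n} \<and> length ys = n}"
    unfolding drain_lists_def drains_at_end_def using member_le_sum_list by fastforce
  show "finite {ys. set ys \<subseteq> {..n} \<and> length ys = n}"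
    by (rule finite_lists_length_eq) simp
qed

lemma drain_lists_Suc_Suc:
  "drain_lists (Suc m) (Suc n) = (\<lambda>(y, r). y # r) ` (SIGMA y:{..n}. drain_lists (m + y) n)"
proof (intro equalityI subsetI)
  fix ys assume "ys \<in> drain_lists (Suc m) (Suc n)"
  then obtain y r where ys: "ys = y # r" and r: "length r = n" "drains_at_end (m + y) r"
    unfolding drain_lists_def by (cases ys) (auto simp: drains_at_end_Cons)
  have "y \<le> n" using r by (simp add: drains_at_end_def)
  then show "ys \<in> (\<lambda>(y, r). y # r) ` (SIGMA y:{..n}. drain_lists (m + y) n)"
    using ys r unfolding drain_lists_def by force
qed (auto simp: drain_lists_def drains_at_end_Cons)

lemma sum_prod_list_drain_lists:
  "(\<Sum>ys\<in>drain_lists m n. prod_list (map p ys)) = first_passage p m n"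
proof (induction n arbitrary: m)
  case 0
  have "drain_lists m 0 = (if m = 0 then {[]} else {})"
    by (auto simp: drain_lists_def drains_at_end_Nil)
  then show ?case by simp
next
  case (Suc n)
  show ?case
  proof (cases m)
    case 0
    then have "drain_lists m (Suc n) = {}"
      by (auto simp: drain_lists_def drains_at_end_def length_Suc_conv)
    then show ?thesis using 0 by simp
  next
    case (Suc m')
    have inj: "inj_on (\<lambda>(y, r). y # r) (SIGMA y:{..n}. drain_lists (m' + y) n)"
      by (auto simp: inj_on_def)
    have "(\<Sum>ys\<in>drain_lists m (Suc n). prod_list (map p ys))
        = (\<Sum>(y, r)\<in>(SIGMA y:{..n}. drain_lists (m' + y) n). p y * prod_list (map p r))"
      unfolding Suc drain_lists_Suc_Suc by (subst sum.reindex[OF inj]) (simp add: case_prod_unfold)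
    also have "\<dots> = (\<Sum>y\<le>n. p y * (\<Sum>r\<in>drain_lists (m' + y) n. prod_list (map p r)))"
      by (subst sum.Sigma[symmetric]) (auto simp: finite_drain_lists sum_distrib_left)
    also have "\<dots> = first_passage p m (Suc n)"
      using Suc.IH by (simp add: Suc)
    finally show ?thesis .
  qed
qed

definition decoding_list :: "nat list \<Rightarrow> bool" where
  "decoding_list ys \<longleftrightarrow> ys \<noteq> [] \<and> hd ys \<noteq> 0 \<and> sum_list ys \<le> length ys
     \<and> (\<forall>z. 1 \<le> z \<and> z < length ys \<longrightarrow> z < sum_list (take z ys))"

lemma decoding_list_Cons: "decoding_list (y # r) \<longleftrightarrow> 0 < y \<and> drains_at_end (y - 1) r"
proof
  assume h: "decoding_list (y # r)"
  then have "0 < y" by (simp add: decoding_list_def)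
  moreover have "j < y - 1 + sum_list (take j r)" if "j < length r" for j
    using h that \<open>0 < y\<close> unfolding decoding_list_def by (auto dest!: spec[of _ "Suc j"])
  ultimately show "0 < y \<and> drains_at_end (y - 1) r"
    using h by (auto simp: decoding_list_def drains_at_end_def)
next
  assume h: "0 < y \<and> drains_at_end (y - 1) r"
  have "z < sum_list (take z (y # r))" if "1 \<le> z" "z < Suc (length r)" for z
    using h that unfolding drains_at_end_def by (cases z) auto
  then show "decoding_list (y # r)"
    using h by (auto simp: decoding_list_def drains_at_end_def)
qed

definition decoding_lists :: "nat \<Rightarrow> nat list set" where
  "decoding_lists n = {ys. length ys = Suc n \<and> decoding_list ys}"

lemma decoding_lists_eq:
  "decoding_lists n = (\<lambda>(y, r). Suc y # r) ` (SIGMA y:{..n}. drain_lists y n)"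
proof (intro equalityI subsetI)
  fix ys assume "ys \<in> decoding_lists n"
  then obtain y r where ys: "ys = y # r" and r: "length r = n" "drains_at_end (y - 1) r" and "0 < y"
    unfolding decoding_lists_def by (cases ys) (auto simp: decoding_list_Cons)
  moreover have "y - 1 \<le> n" using r by (simp add: drains_at_end_def)
  ultimately show "ys \<in> (\<lambda>(y, r). Suc y # r) ` (SIGMA y:{..n}. drain_lists y n)"
    unfolding drain_lists_def by (intro image_eqI[of _ _ "(y - 1, r)"]) auto
qed (auto simp: drain_lists_def decoding_lists_def decoding_list_Cons)

lemma finite_decoding_lists: "finite (decoding_lists n)"
  unfolding decoding_lists_eq by (auto intro!: finite_drain_lists)

lemma sum_prod_list_decoding_lists:
  "(\<Sum>ys\<in>decoding_lists n. prod_list (map p ys)) = passage_from p (\<lambda>y. p (Suc y)) n"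
proof -
  have inj: "inj_on (\<lambda>(y, r). Suc y # r) (SIGMA y:{..n}. drain_lists y n)"
    by (auto simp: inj_on_def)
  have "(\<Sum>ys\<in>decoding_lists n. prod_list (map p ys))
      = (\<Sum>(y, r)\<in>(SIGMA y:{..n}. drain_lists y n). p (Suc y) * prod_list (map p r))"
    unfolding decoding_lists_eq by (subst sum.reindex[OF inj]) (simp add: case_prod_unfold)
  also have "\<dots> = (\<Sum>y\<le>n. p (Suc y) * (\<Sum>r\<in>drain_lists y n. prod_list (map p r)))"
    by (subst sum.Sigma[symmetric]) (auto simp: finite_drain_lists sum_distrib_left)
  finally show ?thesis
    by (simp add: sum_prod_list_drain_lists passage_from_def)
qed

definition arrivals :: "(nat \<Rightarrow> 'a \<Rightarrow> nat) \<Rightarrow> nat \<Rightarrow> 'a \<Rightarrow> nat list" where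
  "arrivals Y n \<omega> = map (\<lambda>i. Y (Suc i) \<omega>) [0..<n]"

lemma length_arrivals [simp]: "length (arrivals Y n \<omega>) = n"
  by (simp add: arrivals_def)

lemma take_arrivals: "z \<le> n \<Longrightarrow> take z (arrivals Y n \<omega>) = arrivals Y z \<omega>"
  by (simp add: arrivals_def take_map)

lemma sum_list_arrivals: "sum_list (arrivals Y n \<omega>) = (\<Sum>i=1..n. Y i \<omega>)"
  by (induction n) (simp_all add: arrivals_def sum.cl_ivl_Suc)

lemma hd_arrivals: "0 < n \<Longrightarrow> hd (arrivals Y n \<omega>) = Y 1 \<omega>"
  by (cases n) (simp_all add: arrivals_def hd_map upt_conv_Cons del: upt_Suc)

definition decodes_at :: "(nat \<Rightarrow> 'a \<Rightarrow> nat) \<Rightarrow> 'a \<Rightarrow> nat \<Rightarrow> bool" where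
  "decodes_at Y \<omega> x \<longleftrightarrow> Y 1 \<omega> \<noteq> 0 \<and> (\<Sum>i=1..x. Y i \<omega>) \<le> x
     \<and> (\<forall>z. 1 \<le> z \<and> z < x \<longrightarrow> z < (\<Sum>i=1..z. Y i \<omega>))"

lemma decodes_at_Suc_iff: "decodes_at Y \<omega> (Suc n) \<longleftrightarrow> arrivals Y (Suc n) \<omega> \<in> decoding_lists n"
proof -
  have "arrivals Y (Suc n) \<omega> \<noteq> []"
    by (simp add: arrivals_def)
  then show ?thesis
    unfolding decodes_at_def decoding_lists_def decoding_list_def
    by (simp add: take_arrivals sum_list_arrivals hd_arrivals)
qed

lemma decode_slots_eqI:
  assumes "decodes_at Y \<omega> x" "1 \<le> x"
  shows "decode_slots Y \<omega> = x"
proof -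
  have "(LEAST z. 1 \<le> z \<and> (\<Sum>i=1..z. Y i \<omega>) \<le> z) = x"
    using assms by (intro Least_equality) (auto simp: decodes_at_def not_less[symmetric])
  then show ?thesis
    using assms by (simp add: decode_slots_def decodes_at_def)
qed


lemma (in prob_space)
  fixes X :: "'a \<Rightarrow> nat" and g :: "nat \<Rightarrow> real"
  assumes X: "X \<in> measurable M (count_space UNIV)" and g_nonneg: "\<And>x. 0 \<le> g x"
    and g_sums: "(\<lambda>x. g x * prob {\<omega>\<in>space M. X \<omega> = x}) sums S"
  shows integrable_nat_valued: "integrable M (\<lambda>\<omega>. g (X \<omega>))"
    and integral_nat_valued: "(\<integral>\<omega>. g (X \<omega>) \<partial>M) = S"
proof -
  let ?A = "\<lambda>x. {\<omega>\<in>space M. X \<omega> = x}"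
  have A_events: "?A x \<in> events" for x
    using measurable_sets[OF X, of "{x}"] by (simp add: vimage_def Int_def conj_commute)
  have g_meas: "(\<lambda>\<omega>. g (X \<omega>)) \<in> borel_measurable M"
    by (rule measurable_compose[OF X]) simp
  have pointwise: "ennreal (g (X \<omega>)) = (\<Sum>x. ennreal (g x) * indicator (?A x) \<omega>)"
    if "\<omega> \<in> space M" for \<omega>
  proof -
    have "(\<Sum>x. ennreal (g x) * indicator (?A x) \<omega>)
        = (\<Sum>x\<in>{X \<omega>}. ennreal (g x) * indicator (?A x) \<omega>)"
      by (rule suminf_finite) (auto simp: indicator_def)
    then show ?thesis using that by simp
  qed
  have "(\<integral>\<^sup>+\<omega>. ennreal (g (X \<omega>)) \<partial>M) = (\<integral>\<^sup>+\<omega>. (\<Sum>x. ennreal (g x) * indicator (?A x) \<omega>) \<partial>M)"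
    by (intro nn_integral_cong) (simp add: pointwise)
  also have "\<dots> = (\<Sum>x. \<integral>\<^sup>+\<omega>. ennreal (g x) * indicator (?A x) \<omega> \<partial>M)"
    by (intro nn_integral_suminf borel_measurable_times_ennreal borel_measurable_const
        borel_measurable_indicator A_events)
  also have "\<dots> = (\<Sum>x. ennreal (g x * prob (?A x)))"
    using g_nonneg by (simp add: nn_integral_cmult_indicator A_events emeasure_eq_measure ennreal_mult)
  also have "\<dots> = ennreal S"
    using g_nonneg by (intro suminf_ennreal_eq g_sums) simp
  finally have nn_integral_eq: "(\<integral>\<^sup>+\<omega>. ennreal (g (X \<omega>)) \<partial>M) = ennreal S" .
  show "integrable M (\<lambda>\<omega>. g (X \<omega>))"
    by (rule integrableI_nn_integral_finite[OF g_meas _ nn_integral_eq]) (simp add: g_nonneg)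
  have "0 \<le> S"
    by (rule sums_le[OF _ sums_zero g_sums]) (simp add: g_nonneg)
  then show "(\<integral>\<omega>. g (X \<omega>) \<partial>M) = S"
    using integral_eq_nn_integral[OF g_meas] g_nonneg nn_integral_eq by simp
qed

lemma prod_list_map_eq_prod_nth: "prod_list (map f ys) = (\<Prod>i<length ys. f (ys ! i))"
  by (induction ys) (simp_all add: prod.lessThan_Suc_shift del: prod.lessThan_Suc)

locale poisson_loss_process = prob_space M for M :: "'a measure" +
  fixes Y :: "nat \<Rightarrow> 'a \<Rightarrow> nat" and lam :: real
  assumes lam_nonneg: "0 \<le> lam" and lam_less_1: "lam < 1"
    and measurable_Y: "\<And>i. 1 \<le> i \<Longrightarrow> Y i \<in> measurable M (count_space UNIV)"
    and indep_Y: "indep_vars (\<lambda>_. count_space UNIV) Y {1..}"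
    and prob_Y_eq: "\<And>i y. 1 \<le> i \<Longrightarrow> prob {\<omega>\<in>space M. Y i \<omega> = y} = poisson lam y"
begin

lemma events_Y_eq: "1 \<le> i \<Longrightarrow> {\<omega>\<in>space M. Y i \<omega> = c} \<in> events"
  using measurable_sets[OF measurable_Y, of i "{c}"] by (simp add: vimage_def Int_def conj_commute)

lemma arrivals_eq_iff:
  "length ys = n \<Longrightarrow> arrivals Y n \<omega> = ys \<longleftrightarrow> (\<forall>i\<in>{..<n}. Y (Suc i) \<omega> = ys ! i)"
  by (auto simp: arrivals_def list_eq_iff_nth_eq)

lemma events_arrivals_eq: "{\<omega>\<in>space M. arrivals Y n \<omega> = ys} \<in> events"
proof (cases "length ys = n")
  case True
  then show ?thesis
    unfolding arrivals_eq_iff[OF True] by (intro sets.sets_Collect_finite_All events_Y_eq) auto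
next
  case False
  then have "{\<omega>\<in>space M. arrivals Y n \<omega> = ys} = {}"
    by (metis (mono_tags, lifting) Collect_empty_eq length_arrivals)
  then show ?thesis by (simp only: sets.empty_sets)
qed

lemma prob_arrivals_eq:
  assumes "length ys = n"
  shows "prob {\<omega>\<in>space M. arrivals Y n \<omega> = ys} = prod_list (map (poisson lam) ys)"
proof (cases "n = 0")
  case True
  then have "{\<omega>\<in>space M. arrivals Y n \<omega> = ys} = space M"
    using assms by (auto simp: arrivals_def)
  then show ?thesis using True assms by (simp add: prob_space)
next
  case False
  define A where "A j = Y j -` {ys ! (j - 1)} \<inter> space M" for j
  have "indep_sets (\<lambda>i. {Y i -` B \<inter> space M | B. B \<in> sets (count_space UNIV)}) {1..}"
    using indep_Y unfolding indep_vars_def2 by simp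
  then have "prob (\<Inter>j\<in>Suc ` {..<n}. A j) = (\<Prod>j\<in>Suc ` {..<n}. prob (A j))"
    by (rule indep_setsD) (use False in \<open>auto simp: A_def\<close>)
  moreover have "(\<Inter>j\<in>Suc ` {..<n}. A j) = {\<omega>\<in>space M. arrivals Y n \<omega> = ys}"
    unfolding arrivals_eq_iff[OF assms] A_def using False by auto
  moreover have "prob (A (Suc i)) = poisson lam (ys ! i)" for i
    using prob_Y_eq[of "Suc i" "ys ! i"] by (simp add: A_def vimage_def Int_def conj_commute)
  then have "(\<Prod>j\<in>Suc ` {..<n}. prob (A j)) = (\<Prod>i<n. poisson lam (ys ! i))"
    by (simp add: prod.reindex)
  ultimately show ?thesis
    using assms by (simp add: prod_list_map_eq_prod_nth)
qed

lemma measurable_arrivals: "arrivals Y n \<in> measurable M (count_space UNIV)"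
  unfolding measurable_count_space_eq2_countable
  using events_arrivals_eq by (simp add: vimage_def Int_def conj_commute)

lemma measurable_decode_slots: "decode_slots Y \<in> measurable M (count_space UNIV)"
proof -
  have stopping: "(\<lambda>\<omega>. 1 \<le> z \<and> sum_list (arrivals Y z \<omega>) \<le> z)
      \<in> measurable M (count_space UNIV)" for z
    by (rule measurable_compose[OF measurable_arrivals]) simp
  have "(\<lambda>\<omega>. if Y 1 \<omega> = 0 then 0 else LEAST z. 1 \<le> z \<and> sum_list (arrivals Y z \<omega>) \<le> z)
      \<in> measurable M (count_space UNIV)"
  proof (rule measurable_If)
    show "(\<lambda>\<omega>. 0) \<in> measurable M (count_space UNIV)"
      by (rule measurable_const) simp
    show "(\<lambda>\<omega>. LEAST z. 1 \<le> z \<and> sum_list (arrivals Y z \<omega>) \<le> z) \<in> measurable M (count_space UNIV)"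
      by (rule measurable_Least[OF stopping])
    show "{\<omega>\<in>space M. Y 1 \<omega> = 0} \<in> sets M"
      by (rule events_Y_eq) simp
  qed
  also have "(\<lambda>\<omega>. if Y 1 \<omega> = 0 then 0 else LEAST z. 1 \<le> z \<and> sum_list (arrivals Y z \<omega>) \<le> z)
      = decode_slots Y"
    by (simp add: fun_eq_iff decode_slots_def sum_list_arrivals)
  finally show ?thesis .
qed

lemma prob_decodes_at:
  "prob {\<omega>\<in>space M. decodes_at Y \<omega> (Suc n)} = passage_from (poisson lam) (\<lambda>y. poisson lam (Suc y)) n"
proof -
  have "prob {\<omega>\<in>space M. decodes_at Y \<omega> (Suc n)}
      = prob (\<Union>ys\<in>decoding_lists n. {\<omega>\<in>space M. arrivals Y (Suc n) \<omega> = ys})"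
    by (intro arg_cong[where f = prob]) (auto simp: decodes_at_Suc_iff)
  also have "\<dots> = (\<Sum>ys\<in>decoding_lists n. prob {\<omega>\<in>space M. arrivals Y (Suc n) \<omega> = ys})"
    by (intro finite_measure_finite_Union)
      (auto simp: finite_decoding_lists events_arrivals_eq disjoint_family_on_def)
  also have "\<dots> = (\<Sum>ys\<in>decoding_lists n. prod_list (map (poisson lam) ys))"
    by (intro sum.cong refl prob_arrivals_eq) (simp add: decoding_lists_def)
  finally show ?thesis
    by (simp add: sum_prod_list_decoding_lists)
qed

lemma events_decodes_at: "{\<omega>\<in>space M. decodes_at Y \<omega> (Suc n)} \<in> events"
  unfolding decodes_at_Suc_iff
  using measurable_sets[OF measurable_arrivals, of "decoding_lists n"]
  by (simp add: vimage_def Int_def conj_commute)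

lemma AE_decodes: "AE \<omega> in M. Y 1 \<omega> = 0 \<or> (\<exists>n. decodes_at Y \<omega> (Suc n))"
proof -
  let ?D = "\<lambda>n. {\<omega>\<in>space M. decodes_at Y \<omega> (Suc n)}" and ?Z = "{\<omega>\<in>space M. Y 1 \<omega> = 0}"
  have "disjoint_family ?D"
    unfolding disjoint_family_on_def
  proof (intro ballI impI)
    fix m n :: nat assume "m \<noteq> n"
    show "?D m \<inter> ?D n = {}"
    proof (rule ccontr)
      assume "?D m \<inter> ?D n \<noteq> {}"
      then obtain \<omega> where "decodes_at Y \<omega> (Suc m)" "decodes_at Y \<omega> (Suc n)"
        by auto
      then have "Suc m = Suc n"
        using decode_slots_eqI[of Y \<omega> "Suc m"] decode_slots_eqI[of Y \<omega> "Suc n"] by simp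
      with \<open>m \<noteq> n\<close> show False by simp
    qed
  qed
  then have "(\<lambda>n. prob (?D n)) sums prob (\<Union>n. ?D n)"
    by (intro finite_measure_UNION) (auto simp: events_decodes_at)
  then have "prob (\<Union>n. ?D n) = 1 - exp (- lam)"
    using sums_passage_from_poisson_Suc[OF lam_nonneg lam_less_1]
    by (simp add: prob_decodes_at sums_iff)
  moreover have "?Z \<inter> (\<Union>n. ?D n) = {}"
    by (auto simp: decodes_at_def)
  ultimately have "prob (?Z \<union> (\<Union>n. ?D n)) = 1"
    using prob_Y_eq[of 1 0] events_Y_eq[of 1] events_decodes_at
    by (simp add: finite_measure_Union poisson_0)
  then have "AE \<omega> in M. \<omega> \<in> ?Z \<union> (\<Union>n. ?D n)"
    by (intro AE_prob_1)
  then show ?thesis by auto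
qed

lemma prob_decode_slots_eq: "prob {\<omega>\<in>space M. decode_slots Y \<omega> = x} = decode_time_pmf lam x"
proof -
  let ?B = "if x = 0 then {\<omega>\<in>space M. Y 1 \<omega> = 0} else {\<omega>\<in>space M. decodes_at Y \<omega> x}"
  have "AE \<omega> in M. \<omega> \<in> {\<omega>\<in>space M. decode_slots Y \<omega> = x} \<longleftrightarrow> \<omega> \<in> ?B"
    using AE_decodes
  proof eventually_elim
    case (elim \<omega>)
    then show ?case
    proof (elim disjE exE)
      assume "Y 1 \<omega> = 0"
      then have "decode_slots Y \<omega> = 0" "\<not> decodes_at Y \<omega> x"
        by (simp_all add: decode_slots_def decodes_at_def)
      then show ?thesis using \<open>Y 1 \<omega> = 0\<close> by auto
    next
      fix n assume "decodes_at Y \<omega> (Suc n)"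
      then have "decode_slots Y \<omega> = Suc n" "Y 1 \<omega> \<noteq> 0"
        by (simp_all add: decode_slots_eqI decodes_at_def)
      then show ?thesis
        using \<open>decodes_at Y \<omega> (Suc n)\<close> decode_slots_eqI[of Y \<omega> x] by auto
    qed
  qed
  moreover have "{\<omega>\<in>space M. decode_slots Y \<omega> = x} \<in> events"
    using measurable_sets[OF measurable_decode_slots, of "{x}"]
    by (simp add: vimage_def Int_def conj_commute)
  moreover have "?B \<in> events"
    using events_Y_eq[of 1] events_decodes_at[of "x - 1"] by (cases x) simp_all
  ultimately have "prob {\<omega>\<in>space M. decode_slots Y \<omega> = x} = prob ?B"
    by (rule measure_eq_AE)
  also have "\<dots> = decode_time_pmf lam x"
    using prob_Y_eq[of 1 0] prob_decodes_at[of "x - 1"]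
    by (cases x) (simp_all add: decode_time_pmf_def poisson_0)
  finally show ?thesis .
qed

lemma AE_decoding_time_exists: "AE \<omega> in M. Y 1 \<omega> \<noteq> 0 \<longrightarrow> (\<exists>z\<ge>1. (\<Sum>i=1..z. Y i \<omega>) \<le> z)"
  using AE_decodes
proof eventually_elim
  case (elim \<omega>)
  then show ?case
    unfolding decodes_at_def by (metis le_add1 plus_1_eq_Suc)
qed

lemma
  shows integrable_decode_slots: "integrable M (\<lambda>\<omega>. real (decode_slots Y \<omega>))"
    and integral_decode_slots: "(\<integral>\<omega>. real (decode_slots Y \<omega>) \<partial>M) = lam / (1 - lam) * exp (- lam)"
proof -
  have "(\<lambda>x. real x * prob {\<omega>\<in>space M. decode_slots Y \<omega> = x}) sums (lam / (1 - lam) * exp (- lam))"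
    using sums_mean_decode_time_pmf[OF lam_nonneg lam_less_1] by (simp add: prob_decode_slots_eq)
  from integrable_nat_valued[OF measurable_decode_slots _ this] integral_nat_valued[OF measurable_decode_slots _ this]
  show "integrable M (\<lambda>\<omega>. real (decode_slots Y \<omega>))"
    "(\<integral>\<omega>. real (decode_slots Y \<omega>) \<partial>M) = lam / (1 - lam) * exp (- lam)"
    by simp_all
qed

lemma
  shows integrable_decode_slots_power2: "integrable M (\<lambda>\<omega>. real (decode_slots Y \<omega>) ^ 2)"
    and integral_decode_slots_power2: "(\<integral>\<omega>. real (decode_slots Y \<omega>) ^ 2 \<partial>M)
      = (1 - lam + lam ^ 2) / (1 - lam) ^ 2 * (lam / (1 - lam) * exp (- lam))"
proof -
  have "(\<lambda>x. real x ^ 2 * prob {\<omega>\<in>space M. decode_slots Y \<omega> = x})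
      sums ((1 - lam + lam ^ 2) / (1 - lam) ^ 2 * (lam / (1 - lam) * exp (- lam)))"
    using sums_moment2_decode_time_pmf[OF lam_nonneg lam_less_1] by (simp add: prob_decode_slots_eq)
  from integrable_nat_valued[OF measurable_decode_slots _ this] integral_nat_valued[OF measurable_decode_slots _ this]
  show "integrable M (\<lambda>\<omega>. real (decode_slots Y \<omega>) ^ 2)"
    "(\<integral>\<omega>. real (decode_slots Y \<omega>) ^ 2 \<partial>M)
      = (1 - lam + lam ^ 2) / (1 - lam) ^ 2 * (lam / (1 - lam) * exp (- lam))"
    by simp_all
qed

end

theorem theorem2:
  fixes M :: "'a measure" and Y :: "nat \<Rightarrow> 'a \<Rightarrow> nat" and lam :: real
  assumes "prob_space M"
    and "0 \<le> lam" and "lam < 1"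
    and "\<And>i. 1 \<le> i \<Longrightarrow> Y i \<in> measurable M (count_space UNIV)"
    and "prob_space.indep_vars M (\<lambda>_. count_space UNIV) Y {1..}"
    and "\<And>i y. 1 \<le> i \<Longrightarrow>
           measure M {\<omega>\<in>space M. Y i \<omega> = y} = lam ^ y / fact y * exp (- lam)"
  shows "(AE \<omega> in M. Y 1 \<omega> \<noteq> 0 \<longrightarrow> (\<exists>z\<ge>1. (\<Sum>i=1..z. Y i \<omega>) \<le> z))
    \<and> (\<forall>x::nat. measure M {\<omega>\<in>space M. decode_slots Y \<omega> = x} =
          (if x = 0 then exp (- lam)
           else if x = 1 then lam * exp (- lam)
           else real (x - 1) ^ (x - 2) / (real x * fact (x - 2)) * lam ^ x * exp (- real x * lam)))
    \<and> integrable M (\<lambda>\<omega>. real (decode_slots Y \<omega>) ^ 2)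
    \<and> integrable M (\<lambda>\<omega>. real (decode_slots Y \<omega>))
    \<and> (\<integral>\<omega>. real (decode_slots Y \<omega>) \<partial>M) = lam / (1 - lam) * exp (- lam)
    \<and> (\<integral>\<omega>. real (decode_slots Y \<omega>) ^ 2 \<partial>M) =
        (1 - lam + lam ^ 2) / (1 - lam) ^ 2 * (\<integral>\<omega>. real (decode_slots Y \<omega>) \<partial>M)"
proof -
  interpret poisson_loss_process M Y lam
    using assms by (intro poisson_loss_process.intro poisson_loss_process_axioms.intro)
      (simp_all add: poisson_def)
  show ?thesis
    using AE_decoding_time_exists prob_decode_slots_eq[unfolded decode_time_pmf_eq]
      integrable_decode_slots integral_decode_slots
      integrable_decode_slots_power2 integral_decode_slots_power2
    by simp
qed

end
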